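(* Let $\mathbb{F}\in\{\mathbb{R},\mathbb{C}\}$, $M>N\ge1$, and let $\mathcal{P}(M,N)$ be the set of Parseval frames for $\mathbb{F}^N$ with $M$ vectors. Let $c_{M,N}=\sqrt{\frac{N(M-N)}{M^2(M-1)}}$ and for $\Phi\in\mathcal{P}(M,N)$ define $$AD(\Phi)=\sum_{i\neq j}\big(|\langle\varphi_i,\varphi_j\rangle|-c_{M,N}\big)^2,\qquad EAD(\Phi)=\sum_{i=1}^M\Big(\|\varphi_i\|^2-\frac{N}{M}\Big)^2+AD(\Phi).$$ If $\Phi$ is a minimizer of $AD$ over $\mathcal{P}(M,N)$ which is equal norm (i.e. $\|\varphi_i\|=\|\varphi_j\|$ for all $i,j$), then $\Phi$ is also a minimizer of $EAD$ over $\mathcal{P}(M,N)$, and every minimizer of $EAD$ over $\mathcal{P}(M,N)$ is equal norm.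
   Context: A Parseval frame for $\mathbb{F}^N$ is a family $\{\varphi_i\}_{i=1}^M\subseteq\mathbb{F}^N$ whose $N\times M$ matrix $\Phi$ (columns $\varphi_i$) satisfies $\Phi\Phi^*=I$. *)

theory Defs
  imports "HOL-Analysis.Analysis" "Jordan_Normal_Form.Conjugate"
begin

text \<open>A family of M vectors in F^N is represented by Phi :: nat => nat => 'a, where
  Phi i k is the k-th coordinate (k < N) of the i-th vector (i < M).
  F is real or complex; conjugate is identity on real and cnj on complex.\<close>

definition inner_F :: "nat \<Rightarrow> (nat \<Rightarrow> 'a::conjugatable_field) \<Rightarrow> (nat \<Rightarrow> 'a) \<Rightarrow> 'a" where
  "inner_F N x y = (\<Sum>k<N. x k * conjugate (y k))"

text \<open>Parseval frame: the N x M synthesis matrix Phi (columns phi_i) satisfies Phi Phi^* = I,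
  i.e. entry (k,l) of Phi Phi^* is sum over i of Phi_{k i} * conj(Phi_{l i}).\<close>
definition parseval_frames :: "nat \<Rightarrow> nat \<Rightarrow> (nat \<Rightarrow> nat \<Rightarrow> 'a::conjugatable_field) set" where
  "parseval_frames M N = {Phi. \<forall>k<N. \<forall>l<N.
      (\<Sum>i<M. Phi i k * conjugate (Phi i l)) = (if k = l then 1 else 0)}"

definition c_MN :: "nat \<Rightarrow> nat \<Rightarrow> real" where
  "c_MN M N = sqrt (real N * (real M - real N) / ((real M)^2 * (real M - 1)))"

definition AD :: "nat \<Rightarrow> nat \<Rightarrow> (nat \<Rightarrow> nat \<Rightarrow> 'a::{conjugatable_field,real_normed_field}) \<Rightarrow> real" where
  "AD M N Phi = (\<Sum>i<M. \<Sum>j\<in>{..<M} - {i}.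
      (norm (inner_F N (Phi i) (Phi j)) - c_MN M N)^2)"

definition sqnorm_F :: "nat \<Rightarrow> (nat \<Rightarrow> 'a::real_normed_field) \<Rightarrow> real" where
  "sqnorm_F N x = (\<Sum>k<N. (norm (x k))^2)"

definition EAD :: "nat \<Rightarrow> nat \<Rightarrow> (nat \<Rightarrow> nat \<Rightarrow> 'a::{conjugatable_field,real_normed_field}) \<Rightarrow> real" where
  "EAD M N Phi = (\<Sum>i<M. (sqnorm_F N (Phi i) - real N / real M)^2) + AD M N Phi"

definition is_minimizer :: "('b \<Rightarrow> real) \<Rightarrow> 'b set \<Rightarrow> 'b \<Rightarrow> bool" where
  "is_minimizer f S x \<longleftrightarrow> x \<in> S \<and> (\<forall>y\<in>S. f x \<le> f y)"

definition equal_norm :: "nat \<Rightarrow> nat \<Rightarrow> (nat \<Rightarrow> nat \<Rightarrow> 'a::real_normed_field) \<Rightarrow> bool" where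
  "equal_norm M N Phi \<longleftrightarrow> (\<forall>i<M. \<forall>j<M. sqnorm_F N (Phi i) = sqnorm_F N (Phi j))"

end

theory Submission
  imports Defs
begin

text \<open>The squared norms of any Parseval frame sum to the trace of \<open>\<Phi>\<Phi>\<^sup>* = I\<close>, i.e. to \<open>N\<close>;
  so an equal-norm Parseval frame has all squared norms equal to \<open>N/M\<close>. Since \<open>EAD\<close> is \<open>AD\<close> plus
  the nonnegative deviation of the squared norms from \<open>N/M\<close>, which vanishes exactly at such frames,
  an equal-norm minimizer of \<open>AD\<close> minimizes \<open>EAD\<close>, and any minimizer of \<open>EAD\<close> has zero deviation.\<close>

definition norm_deviation :: "nat \<Rightarrow> nat \<Rightarrow> (nat \<Rightarrow> nat \<Rightarrow> 'a::real_normed_field) \<Rightarrow> real" where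
  "norm_deviation M N Phi = (\<Sum>i<M. (sqnorm_F N (Phi i) - real N / real M)^2)"

lemma EAD_eq_norm_deviation_plus_AD: "EAD M N Phi = norm_deviation M N Phi + AD M N Phi"
  by (simp add: EAD_def norm_deviation_def)

lemma norm_deviation_nonneg: "norm_deviation M N Phi \<ge> 0"
  unfolding norm_deviation_def by (intro sum_nonneg) simp

lemma norm_deviation_eq_0_iff:
  "norm_deviation M N Phi = 0 \<longleftrightarrow> (\<forall>i<M. sqnorm_F N (Phi i) = real N / real M)"
  unfolding norm_deviation_def by (subst sum_nonneg_eq_0_iff) auto

lemma norm_deviation_eq_0_imp_equal_norm:
  "norm_deviation M N Phi = 0 \<Longrightarrow> equal_norm M N Phi"
  by (simp add: norm_deviation_eq_0_iff equal_norm_def)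

lemma sum_sqnorm_parseval_frame:
  fixes Phi :: "nat \<Rightarrow> nat \<Rightarrow> 'a::{conjugatable_field,real_normed_field}"
  assumes conj_norm: "\<And>x::'a. x * conjugate x = of_real ((norm x)^2)"
    and "Phi \<in> parseval_frames M N"
  shows "(\<Sum>i<M. sqnorm_F N (Phi i)) = real N"
proof -
  have "(of_real (\<Sum>i<M. sqnorm_F N (Phi i)) :: 'a)
      = (\<Sum>i<M. \<Sum>k<N. Phi i k * conjugate (Phi i k))"
    by (simp add: sqnorm_F_def conj_norm)
  also have "\<dots> = (\<Sum>k<N. \<Sum>i<M. Phi i k * conjugate (Phi i k))"
    by (rule sum.swap)
  also have "\<dots> = of_real (real N)"
    using assms(2) by (simp add: parseval_frames_def)
  finally show ?thesis
    by (rule of_real_eq_iff[THEN iffD1])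
qed

lemma equal_norm_parseval_frame_sqnorm:
  fixes Phi :: "nat \<Rightarrow> nat \<Rightarrow> 'a::{conjugatable_field,real_normed_field}"
  assumes conj_norm: "\<And>x::'a. x * conjugate x = of_real ((norm x)^2)"
    and "M > 0" and "Phi \<in> parseval_frames M N" and "equal_norm M N Phi"
  shows "norm_deviation M N Phi = 0"
proof -
  define c where "c = sqnorm_F N (Phi 0)"
  have same: "sqnorm_F N (Phi i) = c" if "i < M" for i
    using assms(2,4) that unfolding equal_norm_def c_def by blast
  have "real N = (\<Sum>i<M. sqnorm_F N (Phi i))"
    using sum_sqnorm_parseval_frame[OF conj_norm assms(3)] by simp
  also have "\<dots> = (\<Sum>i<M. c)"
    using same by (intro sum.cong) simp_all
  finally have "c = real N / real M"
    using \<open>M > 0\<close> by (simp add: field_simps)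
  then show ?thesis
    using same by (simp add: norm_deviation_eq_0_iff)
qed

lemma AD_minimizer_with_zero_deviation_minimizes_EAD:
  assumes "is_minimizer (AD M N) S Phi" and "norm_deviation M N Phi = 0"
  shows "is_minimizer (EAD M N) S Phi"
  unfolding is_minimizer_def
proof (intro conjI ballI)
  show "Phi \<in> S"
    using assms(1) by (simp add: is_minimizer_def)
  fix Psi
  assume "Psi \<in> S"
  then have "AD M N Phi \<le> AD M N Psi"
    using assms(1) by (simp add: is_minimizer_def)
  then show "EAD M N Phi \<le> EAD M N Psi"
    using assms(2) norm_deviation_nonneg[of M N Psi]
    by (simp add: EAD_eq_norm_deviation_plus_AD)
qed

lemma EAD_minimizer_zero_deviation:
  assumes "is_minimizer (AD M N) S Phi" and "norm_deviation M N Phi = 0"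
    and "is_minimizer (EAD M N) S Psi"
  shows "norm_deviation M N Psi = 0"
proof -
  have "Phi \<in> S" and "Psi \<in> S"
    using assms(1,3) by (simp_all add: is_minimizer_def)
  then have "EAD M N Psi \<le> EAD M N Phi" and "AD M N Phi \<le> AD M N Psi"
    using assms(1,3) by (simp_all add: is_minimizer_def)
  then show ?thesis
    using assms(2) norm_deviation_nonneg[of M N Psi]
    by (simp add: EAD_eq_norm_deviation_plus_AD)
qed

lemma equal_norm_AD_minimizers_minimize_EAD:
  fixes M N :: nat
  assumes conj_norm: "\<And>x::'a::{conjugatable_field,real_normed_field}.
      x * conjugate x = of_real ((norm x)^2)"
    and "M > 0"
  shows "\<forall>Phi :: nat \<Rightarrow> nat \<Rightarrow> 'a.
    is_minimizer (AD M N) (parseval_frames M N) Phi \<and> equal_norm M N Phi \<longrightarrow>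
      is_minimizer (EAD M N) (parseval_frames M N) Phi \<and>
      (\<forall>Psi :: nat \<Rightarrow> nat \<Rightarrow> 'a.
        is_minimizer (EAD M N) (parseval_frames M N) Psi \<longrightarrow> equal_norm M N Psi)"
proof (intro allI impI)
  fix Phi :: "nat \<Rightarrow> nat \<Rightarrow> 'a"
  assume "is_minimizer (AD M N) (parseval_frames M N) Phi \<and> equal_norm M N Phi"
  then have min: "is_minimizer (AD M N) (parseval_frames M N) Phi" and "equal_norm M N Phi"
    by simp_all
  then have dev: "norm_deviation M N Phi = 0"
    using \<open>M > 0\<close>
    by (intro equal_norm_parseval_frame_sqnorm[OF conj_norm]) (simp_all add: is_minimizer_def)
  show "is_minimizer (EAD M N) (parseval_frames M N) Phi \<and>
      (\<forall>Psi :: nat \<Rightarrow> nat \<Rightarrow> 'a.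
        is_minimizer (EAD M N) (parseval_frames M N) Psi \<longrightarrow> equal_norm M N Psi)"
  proof (intro conjI allI impI)
    show "is_minimizer (EAD M N) (parseval_frames M N) Phi"
      using min dev by (rule AD_minimizer_with_zero_deviation_minimizes_EAD)
  next
    fix Psi :: "nat \<Rightarrow> nat \<Rightarrow> 'a"
    assume "is_minimizer (EAD M N) (parseval_frames M N) Psi"
    then show "equal_norm M N Psi"
      by (rule norm_deviation_eq_0_imp_equal_norm[OF EAD_minimizer_zero_deviation[OF min dev]])
  qed
qed

lemma real_mult_conjugate: "(x::real) * conjugate x = of_real ((norm x)^2)"
  by (simp add: power2_eq_square)

lemma complex_mult_conjugate: "(x::complex) * conjugate x = of_real ((norm x)^2)"
  using complex_norm_square[of x] by simp

theorem proposition6: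
  fixes M N :: nat
  assumes "1 \<le> N" and "N < M"
  shows "(\<forall>Phi :: nat \<Rightarrow> nat \<Rightarrow> real.
            is_minimizer (AD M N) (parseval_frames M N) Phi \<and> equal_norm M N Phi \<longrightarrow>
              is_minimizer (EAD M N) (parseval_frames M N) Phi \<and>
              (\<forall>Psi :: nat \<Rightarrow> nat \<Rightarrow> real. is_minimizer (EAD M N) (parseval_frames M N) Psi \<longrightarrow> equal_norm M N Psi))
       \<and> (\<forall>Phi :: nat \<Rightarrow> nat \<Rightarrow> complex.
            is_minimizer (AD M N) (parseval_frames M N) Phi \<and> equal_norm M N Phi \<longrightarrow>
              is_minimizer (EAD M N) (parseval_frames M N) Phi \<and>
              (\<forall>Psi :: nat \<Rightarrow> nat \<Rightarrow> complex. is_minimizer (EAD M N) (parseval_frames M N) Psi \<longrightarrow> equal_norm M N Psi))"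
proof -
  have "M > 0"
    using assms(2) by simp
  show ?thesis
    using equal_norm_AD_minimizers_minimize_EAD[OF real_mult_conjugate \<open>M > 0\<close>]
      equal_norm_AD_minimizers_minimize_EAD[OF complex_mult_conjugate \<open>M > 0\<close>]
    by (rule conjI)
qed

end
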